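(* Let $(\sigma_n)_{n\ge1}$ be complex numbers with $\liminf_{n\to\infty}(\operatorname{Re}\sigma_{n+1}-\operatorname{Re}\sigma_n)=\gamma>0$. Then for every $\varepsilon\in(0,1)$ and every $T>\frac{2\pi}{\gamma\sqrt{1-\varepsilon}}$ there exists $n_0=n_0(\varepsilon)\in\mathbb{N}$ (independent of $T$) such that for every $n\ge n_0$ $$\sum_{m\ge n_0,\ m\ne n}|K(\sigma_n-\overline{\sigma_m})|+\sum_{m\ge n_0}|K(\sigma_n+\sigma_m)|\le\frac{4\pi}{T\gamma^2(1-\varepsilon)}\Big(1+\sum_{m=n_0}^\infty\frac{1}{4m^2-1}\Big).$$
   Context: For $T>0$ and $w\in\mathbb{C}$ with $T^2w^2\neq\pi^2$, $K(w):=\dfrac{T\pi}{\pi^2-T^2w^2}$. *)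

theory Defs
  imports "HOL-Analysis.Analysis"
begin

text \<open>K(w) = T pi / (pi^2 - T^2 w^2). At the excluded points T^2 w^2 = pi^2
  the value is 0 by Isabelle's division convention (never relevant in the statement).\<close>
definition K :: "real \<Rightarrow> complex \<Rightarrow> complex" where
  "K T w = complex_of_real (T * pi) / (complex_of_real (pi^2) - (complex_of_real T)^2 * w^2)"

end

theory Submission
  imports Defs
begin

text \<open>Put g = \<gamma> sqrt(1 - \<epsilon>) < \<gamma>. Since the increments of Re \<sigma> eventually exceed some
  h > g, from some n0 on we have Re \<sigma>(m) \<ge> g m and Re \<sigma>(n) - Re \<sigma>(m) \<ge> g (n - m) for m \<le> n.
  Factoring \<pi>^2 - T^2 w^2 = (\<pi> - T w)(\<pi> + T w) and using T g > 2\<pi> gives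
  |K(w)| \<le> 4\<pi> / (T g^2 (4 k^2 - 1)) whenever |Re w| \<ge> g k with k \<ge> 1. So the m-th term of the
  first series is at most 4\<pi>/(T g^2) / (4 (n - m)^2 - 1), and these sum to at most 4\<pi>/(T g^2)
  because the sum of 1/(4k^2 - 1) over k \<ge> 1 telescopes to 1/2; the m-th term of the second
  series is at most 4\<pi>/(T g^2) / (4 m^2 - 1).\<close>

lemma sum_inverse_4sq_minus_1_atLeastAtMost:
  "(\<Sum>k=1..N. 1 / (4 * (real k)^2 - 1)) = real N / (2 * real N + 1)"
proof (induction N)
  case (Suc N)
  have "4 * (real (Suc N))^2 - 1 = (2 * real N + 1) * (2 * real N + 3)"
    by (simp add: algebra_simps power2_eq_square)
  then have "(\<Sum>k=1..Suc N. 1 / (4 * (real k)^2 - 1))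
      = real N / (2 * real N + 1) + 1 / ((2 * real N + 1) * (2 * real N + 3))"
    using Suc by simp
  also have "\<dots> = real (Suc N) / (2 * real (Suc N) + 1)"
    by (simp add: divide_simps) (simp add: algebra_simps)
  finally show ?case .
qed simp

lemma inverse_4sq_minus_1_nonneg:
  fixes x :: real
  assumes "1 \<le> \<bar>x\<bar>"
  shows "0 \<le> 1 / (4 * x^2 - 1)"
proof -
  have "1 \<le> x^2"
    using assms by (metis abs_le_square_iff abs_one one_power2)
  then show ?thesis by simp
qed

lemma sum_inverse_4sq_minus_1_le_half:
  assumes "finite A" "0 \<notin> A"
  shows "(\<Sum>k\<in>A. 1 / (4 * (real k)^2 - 1)) \<le> 1 / 2"
proof -
  obtain N where "A \<subseteq> {..N}"
    using assms(1) finite_nat_iff_bounded_le by blast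
  with assms(2) have A: "A \<subseteq> {1..N}"
    by (force simp: Suc_le_eq intro: gr0I)
  have "0 \<le> 1 / (4 * (real k)^2 - 1)" if "k \<in> {1..N}" for k
    by (rule inverse_4sq_minus_1_nonneg) (use that in simp)
  then have "(\<Sum>k\<in>A. 1 / (4 * (real k)^2 - 1)) \<le> (\<Sum>k=1..N. 1 / (4 * (real k)^2 - 1))"
    using A by (intro sum_mono2) auto
  also have "\<dots> = real N / (2 * real N + 1)"
    by (rule sum_inverse_4sq_minus_1_atLeastAtMost)
  also have "\<dots> \<le> 1 / 2"
    by (simp add: field_simps)
  finally show ?thesis .
qed

lemma sum_inverse_4sq_diff_minus_1_le_one:
  assumes "finite A" "n \<notin> A"
  shows "(\<Sum>m\<in>A. 1 / (4 * (real n - real m)^2 - 1)) \<le> 1"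
proof -
  let ?f = "\<lambda>k::nat. 1 / (4 * (real k)^2 - 1)"
  have below: "(\<Sum>m\<in>{m\<in>A. m < n}. 1 / (4 * (real n - real m)^2 - 1)) = sum ?f ((\<lambda>m. n - m) ` {m\<in>A. m < n})"
    by (subst sum.reindex) (auto simp: inj_on_def of_nat_diff intro!: sum.cong)
  have above: "(\<Sum>m\<in>{m\<in>A. n < m}. 1 / (4 * (real n - real m)^2 - 1)) = sum ?f ((\<lambda>m. m - n) ` {m\<in>A. n < m})"
    by (subst sum.reindex) (auto simp: inj_on_def of_nat_diff power2_commute intro!: sum.cong)
  have "A = {m\<in>A. m < n} \<union> {m\<in>A. n < m}"
    using assms(2) nat_neq_iff by auto
  then have "(\<Sum>m\<in>A. 1 / (4 * (real n - real m)^2 - 1))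
      = (\<Sum>m\<in>{m\<in>A. m < n} \<union> {m\<in>A. n < m}. 1 / (4 * (real n - real m)^2 - 1))"
    by (rule sum.cong) simp
  also have "\<dots> = (\<Sum>m\<in>{m\<in>A. m < n}. 1 / (4 * (real n - real m)^2 - 1))
        + (\<Sum>m\<in>{m\<in>A. n < m}. 1 / (4 * (real n - real m)^2 - 1))"
    using assms(1) by (intro sum.union_disjoint) auto
  also have "\<dots> \<le> 1 / 2 + 1 / 2"
    unfolding below above using assms(1)
    by (intro add_mono sum_inverse_4sq_minus_1_le_half) auto
  finally show ?thesis by simp
qed

lemma summable_inverse_4sq_minus_1_shift:
  assumes "1 \<le> k"
  shows "summable (\<lambda>m. 1 / (4 * (real (m + k))^2 - 1))"
proof (rule summableI_nonneg_bounded)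
  fix m
  show "0 \<le> 1 / (4 * (real (m + k))^2 - 1)"
    using assms by (intro inverse_4sq_minus_1_nonneg) simp
next
  fix M
  have "(\<Sum>m<M. 1 / (4 * (real (m + k))^2 - 1)) = (\<Sum>j\<in>(\<lambda>m. m + k) ` {..<M}. 1 / (4 * (real j)^2 - 1))"
    by (simp add: sum.reindex)
  also have "\<dots> \<le> 1 / 2"
    using assms by (intro sum_inverse_4sq_minus_1_le_half) auto
  finally show "(\<Sum>m<M. 1 / (4 * (real (m + k))^2 - 1)) \<le> 1 / 2" .
qed

lemma
  fixes f :: "nat \<Rightarrow> real"
  assumes nonneg: "\<And>m. 0 \<le> f m" and "f n = 0" and "0 \<le> C"
    and le: "\<And>m. m \<noteq> n \<Longrightarrow> f m \<le> C / (4 * (real n - real m)^2 - 1)"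
  shows summable_of_le_inverse_4sq_dist: "summable f"
    and suminf_le_of_le_inverse_4sq_dist: "suminf f \<le> C"
proof -
  have partial: "(\<Sum>m<M. f m) \<le> C" for M
  proof -
    have "(\<Sum>m<M. f m) = (\<Sum>m\<in>{..<M} - {n}. f m)"
      using \<open>f n = 0\<close> by (simp add: sum_diff1)
    also have "\<dots> \<le> (\<Sum>m\<in>{..<M} - {n}. C * (1 / (4 * (real n - real m)^2 - 1)))"
      using le by (intro sum_mono) auto
    also have "\<dots> \<le> C * 1"
      unfolding sum_distrib_left[symmetric] using \<open>0 \<le> C\<close>
      by (intro mult_left_mono sum_inverse_4sq_diff_minus_1_le_one) auto
    finally show ?thesis by simp
  qed
  show "summable f"
    using nonneg partial by (rule summableI_nonneg_bounded)
  then show "suminf f \<le> C"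
    using partial by (rule suminf_le_const)
qed

lemma
  fixes f b :: "nat \<Rightarrow> real"
  assumes nonneg: "\<And>m. 0 \<le> f m" and zero: "\<And>m. m < k \<Longrightarrow> f m = 0"
    and b: "summable b" and le: "\<And>m. f (m + k) \<le> C * b m"
  shows summable_of_shift_le: "summable f"
    and suminf_le_of_shift_le: "suminf f \<le> C * suminf b"
proof -
  have Cb: "summable (\<lambda>m. C * b m)"
    using b by (rule summable_mult)
  have shift: "summable (\<lambda>m. f (m + k))"
    by (rule summable_comparison_test'[OF Cb]) (simp add: nonneg le)
  then show f: "summable f"
    by (simp add: summable_iff_shift)
  have "suminf f = (\<Sum>m. f (m + k))"
    using suminf_split_initial_segment[OF f, of k] zero by simp
  also have "\<dots> \<le> (\<Sum>m. C * b m)"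
    using le shift Cb by (rule suminf_le)
  also have "\<dots> = C * suminf b"
    using b by (rule suminf_mult)
  finally show "suminf f \<le> C * suminf b" .
qed

lemma norm_K_le:
  assumes T: "T > 0" and Tg: "T * g > 2 * pi" and k: "1 \<le> k" and gk: "g * k \<le> \<bar>Re w\<bar>"
  shows "cmod (K T w) \<le> 4 * pi / (T * g^2 * (4 * k^2 - 1))"
proof -
  let ?D = "complex_of_real (pi^2) - (complex_of_real T)^2 * w^2"
  let ?a = "T * Re w"
  have "T * g > 0"
    using Tg pi_gt_zero by linarith
  then have g: "g > 0"
    using T by (simp add: zero_less_mult_iff)
  have "T * g * k \<le> \<bar>?a\<bar>"
    using gk T by (simp add: abs_mult mult.assoc mult_left_mono)
  moreover have "0 \<le> T * g * k"
    using T g k by simp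
  ultimately have "(T * g * k)^2 \<le> ?a^2"
    by (metis abs_le_square_iff abs_of_nonneg)
  moreover have "pi^2 \<le> (T * g / 2)^2"
    using Tg pi_gt_zero by (intro power_mono) auto
  ultimately have lower: "T^2 * g^2 * (4 * k^2 - 1) / 4 \<le> ?a^2 - pi^2"
    by (simp add: power_mult_distrib field_simps)
  have "1 \<le> k^2"
    using k by (rule one_le_power)
  then have pos: "0 < T^2 * g^2 * (4 * k^2 - 1) / 4"
    using T g by simp
  have "cmod ?D = cmod (pi - T * w) * cmod (pi + T * w)"
    by (simp add: algebra_simps power2_eq_square flip: norm_mult)
  also have "\<dots> \<ge> \<bar>pi - ?a\<bar> * \<bar>pi + ?a\<bar>"
    using abs_Re_le_cmod[of "pi - T * w"] abs_Re_le_cmod[of "pi + T * w"]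
    by (intro mult_mono) auto
  also have "\<bar>pi - ?a\<bar> * \<bar>pi + ?a\<bar> = \<bar>?a^2 - pi^2\<bar>"
    by (simp add: algebra_simps power2_eq_square flip: abs_mult)
  finally have den: "T^2 * g^2 * (4 * k^2 - 1) / 4 \<le> cmod ?D"
    using lower by linarith
  have "cmod (K T w) = T * pi / cmod ?D"
    unfolding K_def norm_divide using T by (simp add: norm_mult)
  also have "\<dots> \<le> T * pi / (T^2 * g^2 * (4 * k^2 - 1) / 4)"
    using den pos T by (intro divide_left_mono mult_pos_pos) auto
  also have "\<dots> = 4 * pi / (T * g^2 * (4 * k^2 - 1))"
    using T by (simp add: power2_eq_square mult.assoc)
  finally show ?thesis .
qed

lemma diff_ge_of_increments_ge:
  fixes x :: "nat \<Rightarrow> real"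
  assumes "\<And>k. N \<le> k \<Longrightarrow> h \<le> x (Suc k) - x k" and "N \<le> m" "m \<le> n"
  shows "h * (real n - real m) \<le> x n - x m"
  using \<open>m \<le> n\<close>
proof (induction n rule: dec_induct)
  case (step k)
  then show ?case
    using assms(1)[of k] \<open>N \<le> m\<close> by (simp add: algebra_simps)
qed simp

lemma linear_separation_of_liminf_increments:
  fixes x :: "nat \<Rightarrow> real"
  assumes "ereal g < liminf (\<lambda>n. ereal (x (Suc n) - x n))"
  obtains n0 where "1 \<le> n0" "\<And>m. n0 \<le> m \<Longrightarrow> g * real m \<le> x m"
    "\<And>m n. n0 \<le> m \<Longrightarrow> m \<le> n \<Longrightarrow> g * (real n - real m) \<le> x n - x m"
proof -
  obtain h where gh: "g < h" and "ereal h < liminf (\<lambda>n. ereal (x (Suc n) - x n))"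
    using ereal_dense2[OF assms] by auto
  then obtain N where "\<forall>k\<ge>N. h < x (Suc k) - x k"
    by (auto dest!: less_LiminfD simp: eventually_sequentially)
  then have N: "\<And>k. N \<le> k \<Longrightarrow> h \<le> x (Suc k) - x k"
    by (simp add: less_imp_le)
  obtain M :: nat where M: "(h * N - x N) / (h - g) < M"
    using reals_Archimedean2 by blast
  define n0 where "n0 = max M (max N 1)"
  show thesis
  proof
    show "1 \<le> n0"
      by (simp add: n0_def)
  next
    fix m assume "n0 \<le> m"
    then have "N \<le> m" "M \<le> m"
      by (auto simp: n0_def)
    have "h * N - x N < (h - g) * M"
      using M gh by (simp add: divide_less_eq mult.commute)
    also have "\<dots> \<le> (h - g) * m"
      using gh \<open>M \<le> m\<close> by (intro mult_left_mono) auto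
    finally show "g * real m \<le> x m"
      using diff_ge_of_increments_ge[of N h x N m] N \<open>N \<le> m\<close> by (simp add: algebra_simps)
  next
    fix m n assume "n0 \<le> m" "m \<le> n"
    then have "h * (real n - real m) \<le> x n - x m"
      by (intro diff_ge_of_increments_ge[of N h x, OF N]) (auto simp: n0_def)
    moreover have "g * (real n - real m) \<le> h * (real n - real m)"
      using gh \<open>m \<le> n\<close> by (intro mult_right_mono) auto
    ultimately show "g * (real n - real m) \<le> x n - x m"
      by linarith
  qed
qed

lemma
  fixes \<sigma> :: "nat \<Rightarrow> complex"
  assumes g: "0 < g" and T: "2 * pi / g < T" and n0: "1 \<le> n0" "n0 \<le> n"
    and growth: "\<And>m. n0 \<le> m \<Longrightarrow> g * real m \<le> Re (\<sigma> m)"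
    and separation: "\<And>m n. n0 \<le> m \<Longrightarrow> m \<le> n \<Longrightarrow> g * (real n - real m) \<le> Re (\<sigma> n) - Re (\<sigma> m)"
  defines "f1 \<equiv> \<lambda>m. if n0 \<le> m \<and> m \<noteq> n then cmod (K T (\<sigma> n - cnj (\<sigma> m))) else 0"
    and "f2 \<equiv> \<lambda>m. if n0 \<le> m then cmod (K T (\<sigma> n + \<sigma> m)) else 0"
  shows summable_norm_K_diff_cnj: "summable f1"
    and summable_norm_K_add: "summable f2"
    and suminf_norm_K_le: "suminf f1 + suminf f2
          \<le> 4 * pi / (T * g^2) * (1 + (\<Sum>m. 1 / (4 * (real (m + n0))^2 - 1)))"
proof -
  have Tg: "T * g > 2 * pi"
    using T g by (simp add: divide_less_eq mult.commute)
  have "0 < 2 * pi / g"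
    using g by simp
  with T have "T > 0"
    by linarith
  define C where "C = 4 * pi / (T * g^2)"
  have "0 \<le> C"
    using \<open>T > 0\<close> by (simp add: C_def)
  have f1_le: "f1 m \<le> C / (4 * (real n - real m)^2 - 1)" if "m \<noteq> n" for m
  proof -
    have dist: "1 \<le> \<bar>real n - real m\<bar>"
      using that by linarith
    show ?thesis
    proof (cases "n0 \<le> m")
      case True
      have "g * \<bar>real n - real m\<bar> \<le> \<bar>Re (\<sigma> n) - Re (\<sigma> m)\<bar>"
      proof (cases "m \<le> n")
        case True
        then show ?thesis
          using separation[OF \<open>n0 \<le> m\<close> True] by simp
      next
        case False
        then show ?thesis
          using separation[OF \<open>n0 \<le> n\<close>, of m] by simp
      qed
      then have "cmod (K T (\<sigma> n - cnj (\<sigma> m))) \<le> 4 * pi / (T * g^2 * (4 * \<bar>real n - real m\<bar>^2 - 1))"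
        using dist by (intro norm_K_le[OF \<open>T > 0\<close> Tg]) simp_all
      then show ?thesis
        using True that by (simp add: f1_def C_def)
    next
      case False
      have "0 \<le> C * (1 / (4 * (real n - real m)^2 - 1))"
        using \<open>0 \<le> C\<close> inverse_4sq_minus_1_nonneg[OF dist] by (rule mult_nonneg_nonneg)
      then show ?thesis
        using False by (simp add: f1_def)
    qed
  qed
  have f2_le: "f2 (m + n0) \<le> C * (1 / (4 * (real (m + n0))^2 - 1))" for m
  proof -
    have "1 \<le> real (m + n0)"
      using n0 by simp
    moreover have "0 \<le> g * real n"
      using g by simp
    then have "g * real (m + n0) \<le> \<bar>Re (\<sigma> n + \<sigma> (m + n0))\<bar>"
      using growth[OF \<open>n0 \<le> n\<close>] growth[of "m + n0"] by simp
    ultimately have "cmod (K T (\<sigma> n + \<sigma> (m + n0))) \<le> 4 * pi / (T * g^2 * (4 * (real (m + n0))^2 - 1))"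
      by (rule norm_K_le[OF \<open>T > 0\<close> Tg])
    then show ?thesis
      by (simp add: f2_def C_def)
  qed
  have b: "summable (\<lambda>m. 1 / (4 * (real (m + n0))^2 - 1))"
    using n0(1) by (rule summable_inverse_4sq_minus_1_shift)
  show "summable f1"
    by (rule summable_of_le_inverse_4sq_dist[OF _ _ \<open>0 \<le> C\<close> f1_le]) (simp_all add: f1_def)
  show "summable f2"
    by (rule summable_of_shift_le[OF _ _ b f2_le]) (simp_all add: f2_def)
  have "suminf f1 \<le> C"
    by (rule suminf_le_of_le_inverse_4sq_dist[OF _ _ \<open>0 \<le> C\<close> f1_le]) (simp_all add: f1_def)
  moreover have "suminf f2 \<le> C * (\<Sum>m. 1 / (4 * (real (m + n0))^2 - 1))"
    by (rule suminf_le_of_shift_le[OF _ _ b f2_le]) (simp_all add: f2_def)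
  ultimately show "suminf f1 + suminf f2 \<le> 4 * pi / (T * g^2) * (1 + (\<Sum>m. 1 / (4 * (real (m + n0))^2 - 1)))"
    unfolding C_def by (simp add: algebra_simps)
qed

theorem lemma5p4:
  fixes \<sigma> :: "nat \<Rightarrow> complex" and \<gamma> :: real
  assumes "\<gamma> > 0"
    and "liminf (\<lambda>n. ereal (Re (\<sigma> (Suc n)) - Re (\<sigma> n))) = ereal \<gamma>"
  shows "\<forall>\<epsilon>. 0 < \<epsilon> \<and> \<epsilon> < 1 \<longrightarrow>
    (\<exists>n0::nat. n0 \<ge> 1 \<and>
      (\<forall>T::real. T > 2 * pi / (\<gamma> * sqrt (1 - \<epsilon>)) \<longrightarrow>
        (\<forall>n\<ge>n0.
          summable (\<lambda>m. if n0 \<le> m \<and> m \<noteq> n then cmod (K T (\<sigma> n - cnj (\<sigma> m))) else 0) \<and>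
          summable (\<lambda>m. if n0 \<le> m then cmod (K T (\<sigma> n + \<sigma> m)) else 0) \<and>
          (\<Sum>m. if n0 \<le> m \<and> m \<noteq> n then cmod (K T (\<sigma> n - cnj (\<sigma> m))) else 0)
          + (\<Sum>m. if n0 \<le> m then cmod (K T (\<sigma> n + \<sigma> m)) else 0)
          \<le> 4 * pi / (T * \<gamma>^2 * (1 - \<epsilon>)) *
             (1 + (\<Sum>m. 1 / (4 * (real (m + n0))^2 - 1))))))"
proof (intro allI impI, goal_cases)
  case (1 \<epsilon>)
  define g where "g = \<gamma> * sqrt (1 - \<epsilon>)"
  have g: "0 < g" "g < \<gamma>"
    using 1 \<open>\<gamma> > 0\<close> by (auto simp: g_def)
  have scale: "4 * pi / (T * \<gamma>^2 * (1 - \<epsilon>)) = 4 * pi / (T * g^2)" for T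
    using 1 by (simp add: g_def power_mult_distrib mult.assoc)
  obtain n0 where n0: "1 \<le> n0" and growth: "\<And>m. n0 \<le> m \<Longrightarrow> g * real m \<le> Re (\<sigma> m)"
    and separation: "\<And>m n. n0 \<le> m \<Longrightarrow> m \<le> n \<Longrightarrow> g * (real n - real m) \<le> Re (\<sigma> n) - Re (\<sigma> m)"
    using linear_separation_of_liminf_increments[of g "\<lambda>n. Re (\<sigma> n)"] assms(2) g(2) by auto
  show ?case
    unfolding scale g_def[symmetric]
    using n0 summable_norm_K_diff_cnj[OF g(1) _ n0 _ growth separation]
      summable_norm_K_add[OF g(1) _ n0 _ growth separation]
      suminf_norm_K_le[OF g(1) _ n0 _ growth separation]
    by blast
qed

end
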